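(* Let $S=(P,L)$ be a slim dense near hexagon, let $Q_1,Q_2$ be two disjoint big quads of $S$, and let $Y$ be the subspace of $S$ generated by $Q_1\cup Q_2$. For $\{i,j\}=\{1,2\}$ and $x\in P\setminus Y$, let $x^{j}$ denote the unique point of $Q_j$ at distance $1$ from $x$, and for $y\in Q_i$ let $z_y$ denote the unique point of $Q_j$ at distance $1$ from $y$. Let $Q$ be a big quad of $S$ disjoint from $Y$, and let $x,y\in Q$ be non-collinear. Then $\big(d(z_{x^{1}},z_{y^{2}}),\,d(z_{x^{2}},z_{y^{1}})\big)$ equals $(2,3)$ or $(3,2)$.
   Context: A slim partial linear space has exactly $3$ points per line; $d$ is the distance in the collinearity graph. A near hexagon is a connected partial linear space of diameter $3$ with no point collinear with all others such that every point has a unique nearest point on every line. A quad is a convex subset of diameter $2$ in which no point is collinear with all others; the near hexagon is dense if any two points at distance $2$ lie in a quad. A quad $Q$ is big if every point of $S$ has distance at most $1$ from $Q$. A subspace is a set of points containing every line meeting it in at least two points; the subspace generated by a set is the intersection of all subspaces containing it. *)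

theory Defs
  imports Main
begin

definition collinear :: "'a set set \<Rightarrow> 'a \<Rightarrow> 'a \<Rightarrow> bool" where
  "collinear L x y \<longleftrightarrow> (\<exists>l\<in>L. x \<in> l \<and> y \<in> l)"

definition coll_rel :: "'a set set \<Rightarrow> ('a \<times> 'a) set" where
  "coll_rel L = {(x, y). x \<noteq> y \<and> collinear L x y}"

definition pdist :: "'a set set \<Rightarrow> 'a \<Rightarrow> 'a \<Rightarrow> nat" where
  "pdist L x y = (LEAST n. (x, y) \<in> coll_rel L ^^ n)"

definition partial_linear_space :: "'a set \<Rightarrow> 'a set set \<Rightarrow> bool" where
  "partial_linear_space P L \<longleftrightarrow>
     (\<forall>l\<in>L. l \<subseteq> P \<and> 2 \<le> card l \<and> finite l) \<and>
     (\<forall>x\<in>P. \<forall>y\<in>P. x \<noteq> y \<longrightarrow>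
        (\<forall>l1\<in>L. \<forall>l2\<in>L. x \<in> l1 \<and> y \<in> l1 \<and> x \<in> l2 \<and> y \<in> l2 \<longrightarrow> l1 = l2))"

definition slim :: "'a set set \<Rightarrow> bool" where
  "slim L \<longleftrightarrow> (\<forall>l\<in>L. finite l \<and> card l = 3)"

definition connected_geom :: "'a set \<Rightarrow> 'a set set \<Rightarrow> bool" where
  "connected_geom P L \<longleftrightarrow> (\<forall>x\<in>P. \<forall>y\<in>P. (x, y) \<in> (coll_rel L)\<^sup>*)"

definition near_hexagon :: "'a set \<Rightarrow> 'a set set \<Rightarrow> bool" where
  "near_hexagon P L \<longleftrightarrow>
     partial_linear_space P L \<and> connected_geom P L \<and>
     (\<forall>x\<in>P. \<forall>y\<in>P. pdist L x y \<le> 3) \<and>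
     (\<exists>x\<in>P. \<exists>y\<in>P. pdist L x y = 3) \<and>
     (\<forall>x\<in>P. \<exists>y\<in>P. y \<noteq> x \<and> \<not> collinear L x y) \<and>
     (\<forall>x\<in>P. \<forall>l\<in>L. \<exists>!y. y \<in> l \<and> (\<forall>z\<in>l. z \<noteq> y \<longrightarrow> pdist L x y < pdist L x z))"

definition convex_set :: "'a set \<Rightarrow> 'a set set \<Rightarrow> 'a set \<Rightarrow> bool" where
  "convex_set P L X \<longleftrightarrow> X \<subseteq> P \<and>
     (\<forall>x\<in>X. \<forall>y\<in>X. \<forall>z\<in>P. pdist L x z + pdist L z y = pdist L x y \<longrightarrow> z \<in> X)"

definition quad :: "'a set \<Rightarrow> 'a set set \<Rightarrow> 'a set \<Rightarrow> bool" where
  "quad P L X \<longleftrightarrow> convex_set P L X \<and>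
     (\<forall>x\<in>X. \<forall>y\<in>X. pdist L x y \<le> 2) \<and>
     (\<exists>x\<in>X. \<exists>y\<in>X. pdist L x y = 2) \<and>
     (\<forall>x\<in>X. \<exists>y\<in>X. y \<noteq> x \<and> \<not> collinear L x y)"

definition dense_nh :: "'a set \<Rightarrow> 'a set set \<Rightarrow> bool" where
  "dense_nh P L \<longleftrightarrow> near_hexagon P L \<and>
     (\<forall>x\<in>P. \<forall>y\<in>P. pdist L x y = 2 \<longrightarrow> (\<exists>Q. quad P L Q \<and> x \<in> Q \<and> y \<in> Q))"

definition big_quad :: "'a set \<Rightarrow> 'a set set \<Rightarrow> 'a set \<Rightarrow> bool" where
  "big_quad P L Q \<longleftrightarrow> quad P L Q \<and> (\<forall>x\<in>P. \<exists>q\<in>Q. pdist L x q \<le> 1)"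

definition subspace :: "'a set \<Rightarrow> 'a set set \<Rightarrow> 'a set \<Rightarrow> bool" where
  "subspace P L X \<longleftrightarrow> X \<subseteq> P \<and>
     (\<forall>l\<in>L. (\<exists>a\<in>l. \<exists>b\<in>l. a \<noteq> b \<and> a \<in> X \<and> b \<in> X) \<longrightarrow> l \<subseteq> X)"

definition generated_subspace :: "'a set \<Rightarrow> 'a set set \<Rightarrow> 'a set \<Rightarrow> 'a set" where
  "generated_subspace P L A = \<Inter>{X. subspace P L X \<and> A \<subseteq> X}"

definition proj_pt :: "'a set set \<Rightarrow> 'a set \<Rightarrow> 'a \<Rightarrow> 'a" where
  "proj_pt L X x = (THE u. u \<in> X \<and> pdist L x u = 1)"

end

theory Submission
  imports Defs
begin

text \<open>A point \<open>z\<close> outside a big quad \<open>X\<close> has a unique neighbour \<open>\<pi> z\<close> in \<open>X\<close>, and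
  \<open>d z q = d (\<pi> z) q + 1\<close> for all \<open>q \<in> X\<close>.  Hence the projections \<open>p1\<close>, \<open>p2\<close> onto \<open>Q1\<close>, \<open>Q2\<close>
  restrict to mutually inverse isometries between \<open>Q1\<close> and \<open>Q2\<close>, and the two distances of the
  theorem are \<open>d (p1 x) (p12 y) + 1\<close> and \<open>d (p1 y) (p12 x) + 1\<close> with \<open>p12 = p1 \<circ> p2\<close>; both lie
  in \<open>{2, 3}\<close>.

  Once \<open>Q\<close> is shown to be a subspace, \<open>p1\<close> and \<open>p12\<close> restrict to isometries \<open>Q \<rightarrow> Q1\<close>, and
  \<open>p1 z\<close>, \<open>p12 z\<close> are collinear for every \<open>z \<in> Q\<close>.  Let \<open>g\<close> be the third point of the line
  through \<open>p1 x\<close> and \<open>p12 x\<close>.  The third point \<open>m\<close> of the line through \<open>g\<close> and \<open>p2 g\<close> lies in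
  \<open>Y\<close> and is collinear with \<open>x\<close>, so \<open>d y m = 3\<close>, which forces \<open>{d (p1 y) g, d (p12 y) g} = {1, 2}\<close>.
  Comparing with the distances from \<open>p1 y\<close> and \<open>p12 y\<close> to the line \<open>{p1 x, p12 x, g}\<close> rules
  out equal values of the two distances.\<close>

lemma relpow_sym:
  assumes "sym R" and "(x, y) \<in> R ^^ n"
  shows "(y, x) \<in> R ^^ n"
  using assms(2)
proof (induction n arbitrary: x y)
  case 0
  then show ?case by simp
next
  case (Suc n)
  then obtain z where "(x, z) \<in> R" "(z, y) \<in> R ^^ n"
    using relpow_Suc_D2 by metis
  then have "(y, z) \<in> R ^^ n" "(z, x) \<in> R"
    using Suc.IH assms(1) by (auto dest: symD)
  then show ?case using relpow_Suc_I by metis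
qed

locale slim_dense_near_hexagon =
  fixes P :: "'a set" and L :: "'a set set"
  assumes slim: "slim L" and dense: "dense_nh P L"
begin

abbreviation d :: "'a \<Rightarrow> 'a \<Rightarrow> nat" where "d \<equiv> pdist L"

definition adj :: "'a \<Rightarrow> 'a \<Rightarrow> bool" where
  "adj x y \<longleftrightarrow> x \<noteq> y \<and> collinear L x y"

lemma near_hexagon: "near_hexagon P L"
  using dense by (simp add: dense_nh_def)

lemma partial_linear_space: "partial_linear_space P L"
  using near_hexagon by (simp add: near_hexagon_def)

lemma line_subset: "l \<in> L \<Longrightarrow> l \<subseteq> P"
  using partial_linear_space by (simp add: partial_linear_space_def)

lemma card_line: "l \<in> L \<Longrightarrow> card l = 3"
  using slim by (simp add: slim_def)

lemma line_unique:
  assumes "x \<noteq> y" "l1 \<in> L" "l2 \<in> L" "x \<in> l1" "y \<in> l1" "x \<in> l2" "y \<in> l2"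
  shows "l1 = l2"
proof -
  have "x \<in> P" "y \<in> P" using line_subset assms by auto
  then show ?thesis
    using partial_linear_space assms unfolding partial_linear_space_def by blast
qed

lemma diameter: "x \<in> P \<Longrightarrow> y \<in> P \<Longrightarrow> d x y \<le> 3"
  using near_hexagon by (simp add: near_hexagon_def)

lemma line_eq_three:
  assumes "l \<in> L" "a \<in> l" "b \<in> l" "c \<in> l" "a \<noteq> b" "a \<noteq> c" "b \<noteq> c"
  shows "l = {a, b, c}"
proof -
  have "finite l" using card_line[OF assms(1)] by (metis card.infinite zero_neq_numeral)
  moreover have "card {a, b, c} = card l" using assms card_line by simp
  ultimately show ?thesis using assms by (metis card_subset_eq empty_subsetI insert_subset)
qed

lemma line_third_point:
  assumes "l \<in> L" "a \<in> l" "b \<in> l" "a \<noteq> b"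
  obtains c where "c \<in> l" "c \<noteq> a" "c \<noteq> b" "l = {a, b, c}"
proof -
  obtain x y z where "l = {x, y, z}" "x \<noteq> y" "y \<noteq> z" "x \<noteq> z"
    using card_line[OF assms(1)] unfolding card_3_iff by blast
  then have "\<exists>c\<in>l. c \<noteq> a \<and> c \<noteq> b" using assms(2-4) by auto
  then show ?thesis using that line_eq_three assms by blast
qed

subsection \<open>The collinearity metric\<close>

lemma dist_path:
  assumes "x \<in> P" "y \<in> P"
  shows "(x, y) \<in> coll_rel L ^^ d x y"
proof -
  have "(x, y) \<in> (coll_rel L)\<^sup>*"
    using near_hexagon assms by (simp add: near_hexagon_def connected_geom_def)
  then obtain n where "(x, y) \<in> coll_rel L ^^ n" using rtrancl_power by blast
  then show ?thesis unfolding pdist_def by (rule LeastI)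
qed

lemma dist_le: "(x, y) \<in> coll_rel L ^^ n \<Longrightarrow> d x y \<le> n"
  unfolding pdist_def by (rule Least_le)

lemma dist_self [simp]: "d x x = 0"
  using dist_le[of x x 0] by simp

lemma dist_commute:
  assumes "x \<in> P" "y \<in> P"
  shows "d x y = d y x"
proof -
  have "sym (coll_rel L)" by (auto simp: sym_def coll_rel_def collinear_def)
  then show ?thesis
    using dist_path[OF assms] dist_path[OF assms(2,1)] dist_le relpow_sym by (metis le_antisym)
qed

lemma dist_eq_0_iff: "x \<in> P \<Longrightarrow> y \<in> P \<Longrightarrow> d x y = 0 \<longleftrightarrow> x = y"
  using dist_path by fastforce

lemma dist_triangle:
  assumes "x \<in> P" "y \<in> P" "z \<in> P"
  shows "d x z \<le> d x y + d y z"
proof -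
  have "(x, z) \<in> coll_rel L ^^ (d x y + d y z)"
    using dist_path[OF assms(1,2)] dist_path[OF assms(2,3)] by (auto simp: relpow_add)
  then show ?thesis by (rule dist_le)
qed

lemma adj_commute: "adj x y \<Longrightarrow> adj y x"
  by (auto simp: adj_def collinear_def)

lemma adj_neq: "adj x y \<Longrightarrow> x \<noteq> y"
  by (simp add: adj_def)

lemma adj_in_P: "adj x y \<Longrightarrow> x \<in> P \<and> y \<in> P"
  using line_subset by (auto simp: adj_def collinear_def)

lemma adj_on_line: "adj x y \<Longrightarrow> \<exists>l\<in>L. x \<in> l \<and> y \<in> l"
  by (auto simp: adj_def collinear_def)

lemma adj_if_on_line: "l \<in> L \<Longrightarrow> x \<in> l \<Longrightarrow> y \<in> l \<Longrightarrow> x \<noteq> y \<Longrightarrow> adj x y"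
  by (auto simp: adj_def collinear_def)

lemma dist_eq_1_iff: "x \<in> P \<Longrightarrow> y \<in> P \<Longrightarrow> d x y = 1 \<longleftrightarrow> adj x y"
proof
  assume "x \<in> P" "y \<in> P" "d x y = 1"
  then show "adj x y" using dist_path[of x y] by (simp add: coll_rel_def adj_def)
next
  assume "x \<in> P" "y \<in> P" "adj x y"
  moreover from \<open>adj x y\<close> have "d x y \<le> 1"
    using dist_le[of x y 1] by (simp add: coll_rel_def adj_def)
  ultimately show "d x y = 1" using dist_eq_0_iff adj_def by fastforce
qed

lemma dist_adj: "adj x y \<Longrightarrow> d x y = 1"
  using dist_eq_1_iff adj_in_P by blast

lemma adj_if_dist_le_1: "x \<in> P \<Longrightarrow> y \<in> P \<Longrightarrow> d x y \<le> 1 \<Longrightarrow> x \<noteq> y \<Longrightarrow> adj x y"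
  using dist_eq_1_iff dist_eq_0_iff by (metis le_neq_implies_less less_one)

lemma line_dist:
  assumes "u \<in> P" "l \<in> L"
  obtains y where "y \<in> l" "\<And>z. z \<in> l \<Longrightarrow> z \<noteq> y \<Longrightarrow> d u z = d u y + 1"
proof -
  have "\<forall>x\<in>P. \<forall>l\<in>L. \<exists>!y. y \<in> l \<and> (\<forall>z\<in>l. z \<noteq> y \<longrightarrow> d x y < d x z)"
    using near_hexagon unfolding near_hexagon_def by (elim conjE) assumption
  then have "\<exists>y. y \<in> l \<and> (\<forall>z\<in>l. z \<noteq> y \<longrightarrow> d u y < d u z)"
    using assms by (meson ex1_implies_ex)
  then obtain y where y: "y \<in> l" "\<And>z. z \<in> l \<Longrightarrow> z \<noteq> y \<Longrightarrow> d u y < d u z"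
    by blast
  have "d u z = d u y + 1" if "z \<in> l" "z \<noteq> y" for z
  proof -
    have "y \<in> P" "z \<in> P" using that y(1) line_subset assms(2) by auto
    then have "d u z \<le> d u y + d y z" using dist_triangle assms(1) by blast
    moreover have "d y z = 1"
      using dist_adj adj_if_on_line[OF assms(2) y(1) that(1) that(2)[symmetric]] by blast
    moreover have "d u y < d u z" using y(2) that by blast
    ultimately show ?thesis by linarith
  qed
  then show ?thesis using that y(1) by blast
qed

lemma line_dist_cases:
  assumes "u \<in> P" "l \<in> L" "a \<in> l" "b \<in> l" "c \<in> l" "a \<noteq> b" "a \<noteq> c" "b \<noteq> c"
  shows "d u b = d u a + 1 \<and> d u c = d u a + 1 \<or> d u a = d u b + 1 \<and> d u c = d u b + 1 \<or>
    d u a = d u c + 1 \<and> d u b = d u c + 1"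
proof -
  obtain y where "y \<in> l" and y: "\<And>z. z \<in> l \<Longrightarrow> z \<noteq> y \<Longrightarrow> d u z = d u y + 1"
    using line_dist assms(1,2) by blast
  have "l = {a, b, c}" using line_eq_three assms(2-8) by blast
  then consider "y = a" | "y = b" | "y = c" using \<open>y \<in> l\<close> by blast
  then show ?thesis
  proof cases
    case 1
    then show ?thesis using y[OF assms(4)] y[OF assms(5)] assms(6,7) by blast
  next
    case 2
    then show ?thesis using y[OF assms(3)] y[OF assms(5)] assms(6,8) by blast
  next
    case 3
    then show ?thesis using y[OF assms(3)] y[OF assms(4)] assms(7,8) by blast
  qed
qed

lemma line_through_triangle:
  assumes "adj a b" "adj b c" "adj a c"
  obtains l where "l \<in> L" "a \<in> l" "b \<in> l" "c \<in> l"
proof -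
  obtain l where l: "l \<in> L" "a \<in> l" "b \<in> l" using adj_on_line assms by blast
  have "c \<in> P" using adj_in_P assms(2) by blast
  then obtain y where "y \<in> l" and y: "\<And>z. z \<in> l \<Longrightarrow> z \<noteq> y \<Longrightarrow> d c z = d c y + 1"
    using line_dist l(1) by blast
  have "d c a = 1" "d c b = 1" using dist_adj assms adj_commute by blast+
  then have "d c y = 0" using y[of a] y[of b] l adj_neq[OF assms(1)] by fastforce
  then have "c = y" using dist_eq_0_iff adj_in_P[OF assms(2)] line_subset l(1) \<open>y \<in> l\<close> by blast
  then show ?thesis using that l \<open>y \<in> l\<close> by blast
qed

lemma on_line_if_adj_to_two:
  assumes "l \<in> L" "a \<in> l" "b \<in> l" "a \<noteq> b" "adj a c" "adj b c"
  shows "c \<in> l"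
proof -
  obtain l' where "l' \<in> L" "a \<in> l'" "b \<in> l'" "c \<in> l'"
    using line_through_triangle[OF adj_if_on_line[OF assms(1-4)] assms(6) assms(5)]
    by blast
  then show ?thesis using line_unique[OF assms(4)] assms(1-3) by blast
qed

lemma on_line_if_adj_and_near:
  assumes "l \<in> L" "a \<in> l" "b \<in> l" "a \<noteq> b" "t \<in> P" "adj t b" "d t a \<le> 1"
  shows "t \<in> l"
proof (cases "t = a")
  case False
  then have "adj a t"
    using adj_if_dist_le_1 assms(5,7) line_subset assms(1,2) adj_commute by blast
  then show ?thesis
    using on_line_if_adj_to_two[OF assms(1-4)] assms(6) adj_commute by blast
qed (use assms(2) in simp)

lemma subspace_line:
  "subspace P L Z \<Longrightarrow> l \<in> L \<Longrightarrow> a \<in> l \<Longrightarrow> b \<in> l \<Longrightarrow> a \<noteq> b \<Longrightarrow> a \<in> Z \<Longrightarrow> b \<in> Z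
    \<Longrightarrow> l \<subseteq> Z"
  unfolding subspace_def by blast

lemma subspace_generated_subspace:
  assumes "A \<subseteq> P"
  shows "subspace P L (generated_subspace P L A)"
proof -
  have "subspace P L P" using line_subset by (auto simp: subspace_def)
  then have "generated_subspace P L A \<subseteq> P"
    using assms unfolding generated_subspace_def by blast
  moreover have "l \<subseteq> generated_subspace P L A"
    if "l \<in> L" "a \<in> l" "b \<in> l" "a \<noteq> b"
      "a \<in> generated_subspace P L A" "b \<in> generated_subspace P L A" for l a b
    using that subspace_line unfolding generated_subspace_def by blast
  ultimately show ?thesis unfolding subspace_def by blast
qed

lemma quad_subset: "quad P L X \<Longrightarrow> X \<subseteq> P"
  by (simp add: quad_def convex_set_def)

lemma quad_convex:
  "quad P L X \<Longrightarrow> x \<in> X \<Longrightarrow> y \<in> X \<Longrightarrow> z \<in> P \<Longrightarrow> d x z + d z y = d x y \<Longrightarrow> z \<in> X"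
  unfolding quad_def convex_set_def by blast

lemma quad_diameter: "quad P L X \<Longrightarrow> x \<in> X \<Longrightarrow> y \<in> X \<Longrightarrow> d x y \<le> 2"
  unfolding quad_def by blast

lemma quad_common_neighbour:
  assumes "quad P L X" "x \<in> X" "y \<in> X" "d x y = 2" "adj x z" "adj z y"
  shows "z \<in> X"
  using quad_convex[OF assms(1-3)] assms(4-6) dist_adj adj_in_P by fastforce

lemma quad_dist_eq_2:
  assumes "quad P L X" "x \<in> X" "y \<in> X" "x \<noteq> y" "\<not> adj x y"
  shows "d x y = 2"
proof -
  have "x \<in> P" "y \<in> P" using quad_subset assms(1-3) by auto
  then have "d x y \<noteq> 0" "d x y \<noteq> 1" using dist_eq_0_iff dist_eq_1_iff assms(4,5) by auto
  then show ?thesis using quad_diameter assms(1-3) by fastforce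
qed

lemma quad_far_point:
  assumes "quad P L X" "x \<in> X"
  obtains y where "y \<in> X" "d x y = 2"
proof -
  obtain y where "y \<in> X" "y \<noteq> x" "\<not> collinear L x y"
    using assms unfolding quad_def by blast
  then show ?thesis using that quad_dist_eq_2 assms adj_def by metis
qed

lemma big_quad_neighbour:
  assumes "big_quad P L X" "z \<in> P" "z \<notin> X"
  obtains q where "q \<in> X" "adj z q"
proof -
  obtain q where "q \<in> X" "d z q \<le> 1" using assms(1,2) unfolding big_quad_def by blast
  moreover have "q \<in> P" using \<open>q \<in> X\<close> assms(1) quad_subset unfolding big_quad_def by blast
  ultimately show ?thesis using that adj_if_dist_le_1 assms(2,3) by blast
qed

text \<open>Otherwise the third point of the line would be a common neighbour of two points of the quad
  at distance \<open>2\<close>.\<close>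

lemma quad_near_secant:
  assumes X: "quad P L X" and l: "l \<in> L" "r \<in> l" "r' \<in> l" "p \<in> l" "r \<noteq> r'"
    and "r \<in> X" "r' \<in> X" "p \<notin> X" "q \<in> X"
  shows "d q r \<le> 1 \<or> d q r' \<le> 1"
proof (rule ccontr)
  assume far: "\<not> (d q r \<le> 1 \<or> d q r' \<le> 1)"
  have "p \<noteq> r" "p \<noteq> r'" using assms(7-9) by auto
  have P: "q \<in> P" "p \<in> P" using quad_subset X \<open>q \<in> X\<close> line_subset l by auto
  have "d q r \<le> 2" "d q r' \<le> 2" using quad_diameter X assms(7,8,10) by auto
  then have "d q p = 1" "d q r = 2"
    using line_dist_cases[OF P(1) l(1-3,4) l(5) \<open>p \<noteq> r\<close>[symmetric] \<open>p \<noteq> r'\<close>[symmetric]] far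
      dist_eq_0_iff[OF P] assms(9,10) by auto
  then have "p \<in> X"
    using quad_common_neighbour[OF X assms(10,7)] dist_eq_1_iff P adj_commute
      adj_if_on_line[OF l(1,4,2) \<open>p \<noteq> r\<close>] by blast
  then show False using assms(9) by blast
qed

lemma quad_adj_if_common_neighbour:
  assumes X: "quad P L X" and z: "z \<notin> X"
    and q: "q1 \<in> X" "q2 \<in> X" "q1 \<noteq> q2" "adj z q1" "adj z q2"
  shows "adj q1 q2"
proof (rule ccontr)
  assume "\<not> adj q1 q2"
  then have "d q1 q2 = 2" using quad_dist_eq_2 X q(1-3) by blast
  then have "z \<in> X" using quad_common_neighbour[OF X q(1,2)] q(4,5) adj_commute by blast
  then show False using z by blast
qed

lemma quad_unique_neighbour_outside_subspace:
  assumes X: "quad P L X" and Z: "subspace P L Z" "X \<subseteq> Z" and z: "z \<notin> Z"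
    and q: "q1 \<in> X" "q2 \<in> X" "adj z q1" "adj z q2"
  shows "q1 = q2"
proof (rule ccontr)
  assume ne: "q1 \<noteq> q2"
  then have "adj q1 q2" using quad_adj_if_common_neighbour[OF X _ q(1,2) ne q(3,4)] Z(2) z by blast
  then obtain l where "l \<in> L" "z \<in> l" "q1 \<in> l" "q2 \<in> l"
    using line_through_triangle q(3,4) adj_commute by metis
  then show False using subspace_line[OF Z(1)] ne q(1,2) Z(2) z by blast
qed

lemma dist_through_unique_neighbour:
  assumes X: "quad P L X" and z: "z \<in> P" "z \<notin> X" and r: "r \<in> X" "adj z r"
    and unique: "\<And>q. q \<in> X \<Longrightarrow> adj z q \<Longrightarrow> q = r" and q: "q \<in> X"
  shows "d z q = d r q + 1"
proof -
  have P: "r \<in> P" "q \<in> P" using quad_subset X r q by auto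
  have "d z r = 1" using dist_adj r(2) by blast
  then have upper: "d z q \<le> d r q + 1" using dist_triangle[OF z(1) P(1,2)] by linarith
  have "d z q \<noteq> 0" using dist_eq_0_iff z q P by auto
  have not_1: "d z q \<noteq> 1" if "q \<noteq> r" using unique q that dist_eq_1_iff z(1) P(2) by blast
  consider "d r q = 0" | "d r q = 1" | "d r q = 2" using quad_diameter X r(1) q by fastforce
  then show ?thesis
  proof cases
    case 1
    then show ?thesis using \<open>d z r = 1\<close> dist_eq_0_iff P by auto
  next
    case 2
    then show ?thesis using upper \<open>d z q \<noteq> 0\<close> not_1 by fastforce
  next
    case 3
    obtain l where l: "l \<in> L" "z \<in> l" "r \<in> l" using adj_on_line r(2) by blast
    obtain r' where r': "r' \<in> l" "r' \<noteq> z" "r' \<noteq> r"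
      using line_third_point l adj_neq r(2) by metis
    have "d z q \<noteq> 2"
    proof
      assume "d z q = 2"
      then have "d q z = d q r" using 3 dist_commute z(1) P by simp
      then have "d q r' = 1"
        using line_dist_cases[OF P(2) l(1,2,3) r'(1) adj_neq[OF r(2)] r'(2)[symmetric]
            r'(3)[symmetric]] 3 dist_commute P by auto
      then have "r' \<in> X"
        using quad_common_neighbour[OF X r(1) q 3] adj_if_on_line[OF l(1,3) r'(1) r'(3)[symmetric]]
          dist_eq_1_iff[OF P(2)] line_subset l(1) r'(1) adj_commute by blast
      then show False using unique adj_if_on_line[OF l(1,2) r'(1) r'(2)[symmetric]] r'(3) by blast
    qed
    then show ?thesis using upper \<open>d z q \<noteq> 0\<close> not_1 3 by fastforce
  qed
qed

lemma dist_through_neighbour_outside_subspace: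
  assumes X: "quad P L X" and Z: "subspace P L Z" "X \<subseteq> Z" and z: "z \<in> P" "z \<notin> Z"
    and r: "r \<in> X" "adj z r" and q: "q \<in> X"
  shows "d z q = d r q + 1"
  using dist_through_unique_neighbour[OF X z(1) _ r _ q] Z(2) z(2) r
    quad_unique_neighbour_outside_subspace[OF X Z z(2) _ r(1)] by blast

end

subsection \<open>Projection onto a big quad\<close>

text \<open>Convexity (closure under geodesics) does not make a quad a subspace.  Here this,
  and the uniqueness of the neighbour in \<open>X\<close> of a point outside \<open>X\<close>, is obtained from an
  auxiliary big quad \<open>Q\<close> avoiding a subspace \<open>Y \<supseteq> X\<close>.\<close>

locale big_quad_in_subspace = slim_dense_near_hexagon +
  fixes X Y Q :: "'a set"
  assumes big_quad_X: "big_quad P L X" and big_quad_Q: "big_quad P L Q"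
    and X_subset_Y: "X \<subseteq> Y" and subspace_Y: "subspace P L Y" and Q_disjoint_Y: "Q \<inter> Y = {}"
begin

lemma quad_X: "quad P L X"
  using big_quad_X by (simp add: big_quad_def)

lemma quad_Q: "quad P L Q"
  using big_quad_Q by (simp add: big_quad_def)

lemma X_subset: "X \<subseteq> P"
  using quad_subset quad_X .

lemma Q_subset: "Q \<subseteq> P"
  using quad_subset quad_Q .

lemma notin_X_if_in_Q: "q \<in> Q \<Longrightarrow> q \<notin> X"
  using Q_disjoint_Y X_subset_Y by blast

lemma dist_from_outside_Y:
  "r \<in> P \<Longrightarrow> r \<notin> Y \<Longrightarrow> c \<in> X \<Longrightarrow> adj r c \<Longrightarrow> q \<in> X \<Longrightarrow> d r q = d c q + 1"
  using dist_through_neighbour_outside_subspace[OF quad_X subspace_Y X_subset_Y] .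

text \<open>For \<open>z \<in> Y\<close> collinear with \<open>q1 \<noteq> q2\<close> in \<open>X\<close>, the line \<open>z q1 q2\<close> lies in \<open>Y\<close>; a neighbour
  \<open>r \<in> Q\<close> of \<open>z\<close> is outside \<open>Y\<close>, and its neighbour in \<open>X\<close> turns out to be collinear with \<open>q1\<close>
  and \<open>q2\<close>, hence to lie on that line.\<close>

lemma unique_neighbour_in_Y:
  assumes z: "z \<in> Y" "z \<notin> X" and q: "q1 \<in> X" "q2 \<in> X" "adj z q1" "adj z q2"
  shows "q1 = q2"
proof (rule ccontr)
  assume ne: "q1 \<noteq> q2"
  have "adj q1 q2" using quad_adj_if_common_neighbour[OF quad_X z(2) q(1,2) ne q(3,4)] .
  then obtain l where l: "l \<in> L" "z \<in> l" "q1 \<in> l" "q2 \<in> l"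
    using line_through_triangle q(3,4) adj_commute by metis
  have "l \<subseteq> Y" using subspace_line[OF subspace_Y l(1,3,4) ne] q(1,2) X_subset_Y by blast
  have zP: "z \<in> P" using z(1) subspace_Y by (auto simp: subspace_def)
  have "z \<notin> Q" using z(1) Q_disjoint_Y by blast
  then obtain r where r: "r \<in> Q" "adj z r" using big_quad_neighbour[OF big_quad_Q zP] by blast
  then have rY: "r \<notin> Y" and rP: "r \<in> P" using Q_disjoint_Y Q_subset by auto
  then obtain c where c: "c \<in> X" "adj r c"
    using big_quad_neighbour[OF big_quad_X rP] X_subset_Y by blast
  have adj_c: "adj c q" if "q \<in> l" "q \<in> X" for q
  proof -
    have "q \<noteq> z" using that z(2) by blast
    then have "d z q = 1" using dist_adj adj_if_on_line l(1,2) that(1) by blast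
    moreover have "d r z = 1" using dist_adj adj_commute r(2) by blast
    ultimately have "d r q \<le> 2" using dist_triangle[OF rP zP, of q] X_subset that(2) by auto
    then have "d c q \<le> 1" using dist_from_outside_Y[OF rP rY c that(2)] by simp
    moreover have "c \<noteq> q"
    proof
      assume "c = q"
      then have "r \<in> l"
        using on_line_if_adj_to_two[OF l(1,2) that(1) \<open>q \<noteq> z\<close>[symmetric]] r(2) c(2)
          adj_commute by blast
      then show False using \<open>l \<subseteq> Y\<close> rY by blast
    qed
    ultimately show ?thesis using adj_if_dist_le_1 X_subset c(1) that(2) by blast
  qed
  have "c \<in> l" using on_line_if_adj_to_two[OF l(1,3,4) ne] adj_c l q(1,2) adj_commute by blast
  moreover have "l = {q1, q2, z}" using line_eq_three l ne q(1,2) z(2) by (metis (full_types))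
  ultimately show False using adj_c[of q1] adj_c[of q2] l(3,4) q(1,2) c(1) z(2) adj_neq by auto
qed

lemma unique_neighbour:
  "z \<notin> X \<Longrightarrow> q1 \<in> X \<Longrightarrow> q2 \<in> X \<Longrightarrow> adj z q1 \<Longrightarrow> adj z q2 \<Longrightarrow> q1 = q2"
  using unique_neighbour_in_Y
    quad_unique_neighbour_outside_subspace[OF quad_X subspace_Y X_subset_Y] by blast

lemma line_subset_X:
  assumes "l \<in> L" "a \<in> l" "b \<in> l" "a \<noteq> b" "a \<in> X" "b \<in> X"
  shows "l \<subseteq> X"
proof
  fix z assume "z \<in> l"
  show "z \<in> X"
  proof (rule ccontr)
    assume "z \<notin> X"
    then have "z \<noteq> a" "z \<noteq> b" using assms(5,6) by auto
    then show False
      using unique_neighbour[OF \<open>z \<notin> X\<close> assms(5,6)] adj_if_on_line[OF assms(1) \<open>z \<in> l\<close>]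
        assms(1-4) by blast
  qed
qed

abbreviation proj :: "'a \<Rightarrow> 'a" where "proj \<equiv> proj_pt L X"

lemma proj_neighbour:
  assumes "z \<in> P" "z \<notin> X"
  shows "proj z \<in> X" "adj z (proj z)"
proof -
  obtain q where q: "q \<in> X" "adj z q" using big_quad_neighbour[OF big_quad_X assms] by blast
  have "u = q" if "u \<in> X \<and> d z u = 1" for u
    using unique_neighbour[OF assms(2)] q that dist_eq_1_iff assms(1) X_subset by blast
  then have "proj z = q"
    unfolding proj_pt_def using q dist_adj by (intro the_equality) auto
  then show "proj z \<in> X" "adj z (proj z)" using q by simp_all
qed

lemma proj_eqI: "z \<in> P \<Longrightarrow> z \<notin> X \<Longrightarrow> q \<in> X \<Longrightarrow> adj z q \<Longrightarrow> proj z = q"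
  using proj_neighbour unique_neighbour by metis

lemma dist_proj: "z \<in> P \<Longrightarrow> z \<notin> X \<Longrightarrow> q \<in> X \<Longrightarrow> d z q = d (proj z) q + 1"
  using dist_through_unique_neighbour[OF quad_X] proj_neighbour unique_neighbour by metis

lemma dist_proj_le:
  assumes "z \<in> P" "z \<notin> X" "z' \<in> P" "z' \<notin> X"
  shows "d (proj z) (proj z') \<le> d z z'"
proof -
  have "d z (proj z') = d (proj z) (proj z') + 1" using dist_proj proj_neighbour assms by blast
  moreover have "d z (proj z') \<le> d z z' + d z' (proj z')"
    using dist_triangle proj_neighbour assms X_subset by blast
  moreover have "d z' (proj z') = 1" using proj_neighbour assms dist_adj by blast
  ultimately show ?thesis by linarith
qed

lemma adj_proj_if_line_avoids:
  assumes "l \<in> L" "z \<in> l" "z' \<in> l" "z \<noteq> z'" "l \<inter> X = {}"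
  shows "adj (proj z) (proj z')"
proof -
  have P: "z \<in> P" "z' \<in> P" and X: "z \<notin> X" "z' \<notin> X" using assms line_subset by auto
  have "d (proj z) (proj z') \<le> 1"
    using dist_proj_le[OF P(1) X(1) P(2) X(2)] dist_adj adj_if_on_line assms(1-4) by simp
  moreover have "proj z \<noteq> proj z'"
  proof
    assume "proj z = proj z'"
    then have "proj z \<in> l"
      using on_line_if_adj_to_two[OF assms(1-4)] proj_neighbour P X by (metis adj_commute)
    then show False using proj_neighbour P X assms(5) by blast
  qed
  ultimately show ?thesis using adj_if_dist_le_1 proj_neighbour P X X_subset by blast
qed

lemma X_subset_proj_image: "X \<subseteq> proj ` Q"
proof
  fix u assume "u \<in> X"
  then obtain q where "q \<in> Q" "adj u q"
    using big_quad_neighbour[OF big_quad_Q] notin_X_if_in_Q X_subset by blast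
  then show "u \<in> proj ` Q"
    using proj_eqI \<open>u \<in> X\<close> notin_X_if_in_Q Q_subset adj_commute by (metis image_eqI subsetD)
qed

text \<open>Two points of \<open>Q\<close> with the same projection \<open>u\<close> span a line through \<open>u\<close>, which puts every point
  of \<open>Q\<close> within distance \<open>2\<close> of \<open>u\<close>; but a point of \<open>Q\<close> projecting onto a point of \<open>X\<close> opposite
  to \<open>u\<close> is at distance \<open>3\<close> from \<open>u\<close>.\<close>

lemma inj_on_proj: "inj_on proj Q"
proof (rule inj_onI, rule ccontr)
  fix r r' assume r: "r \<in> Q" "r' \<in> Q" and eq: "proj r = proj r'" and ne: "r \<noteq> r'"
  have P: "r \<in> P" "r' \<in> P" and X: "r \<notin> X" "r' \<notin> X"
    using r Q_subset notin_X_if_in_Q by auto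
  define u where "u = proj r"
  have u: "u \<in> X" "adj r u" "adj r' u" using proj_neighbour P X eq unfolding u_def by metis+
  have uP: "u \<in> P" and uQ: "u \<notin> Q" using u(1) X_subset notin_X_if_in_Q by auto
  have "adj r r'" using quad_adj_if_common_neighbour[OF quad_Q uQ r ne] u(2,3) adj_commute by blast
  then obtain l where l: "l \<in> L" "r \<in> l" "r' \<in> l" "u \<in> l"
    using line_through_triangle u(2,3) adj_commute by metis
  have close: "d q u \<le> 2" if "q \<in> Q" for q
  proof -
    have "q \<in> P" using that Q_subset by blast
    moreover have "d r u = 1" "d r' u = 1" using u dist_adj by blast+
    ultimately show ?thesis
      using quad_near_secant[OF quad_Q l(1-4) ne r uQ that] dist_triangle[of q r u]
        dist_triangle[of q r' u] P uP by fastforce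
  qed
  obtain s where s: "s \<in> X" "d u s = 2" using quad_far_point quad_X u(1) by blast
  obtain q where q: "q \<in> Q" "proj q = s" using X_subset_proj_image s(1) by blast
  have "d q u = d s u + 1" using dist_proj q Q_subset notin_X_if_in_Q u(1) by blast
  then show False using close[OF q(1)] s dist_commute uP X_subset by auto
qed

lemma dist_proj_on_Q:
  assumes Q: "subspace P L Q" and q: "q \<in> Q" "q' \<in> Q"
  shows "d (proj q) (proj q') = d q q'"
proof -
  have P: "q \<in> P" "q' \<in> P" using q Q_subset by auto
  have X: "q \<notin> X" "q' \<notin> X" using q notin_X_if_in_Q by auto
  have u: "proj q' \<in> X" "adj q' (proj q')" using proj_neighbour P(2) X(2) by auto
  then have uP: "proj q' \<in> P" and uQ: "proj q' \<notin> Q" using X_subset notin_X_if_in_Q by auto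
  have "d q (proj q') = d (proj q) (proj q') + 1" using dist_proj P(1) X(1) u(1) by blast
  moreover have "d (proj q') q = d q' q + 1"
    using dist_through_neighbour_outside_subspace[OF quad_Q Q subset_refl uP uQ q(2) _ q(1)] u(2)
      adj_commute by blast
  ultimately show ?thesis using dist_commute P uP by simp
qed

end

locale two_big_quads = slim_dense_near_hexagon +
  fixes Q1 Q2 Q :: "'a set"
  assumes big_quad_Q1: "big_quad P L Q1" and big_quad_Q2: "big_quad P L Q2"
    and Q1_Q2_disjoint: "Q1 \<inter> Q2 = {}" and big_quad_Q: "big_quad P L Q"
    and Q_disjoint_Y: "Q \<inter> generated_subspace P L (Q1 \<union> Q2) = {}"
begin

abbreviation Y :: "'a set" where "Y \<equiv> generated_subspace P L (Q1 \<union> Q2)"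

lemma Q1_Q2_subset_Y: "Q1 \<union> Q2 \<subseteq> Y"
  unfolding generated_subspace_def by blast

lemma subspace_Y: "subspace P L Y"
  using subspace_generated_subspace quad_subset big_quad_Q1 big_quad_Q2
  by (simp add: big_quad_def)

end

sublocale two_big_quads \<subseteq> Q1: big_quad_in_subspace P L Q1 "generated_subspace P L (Q1 \<union> Q2)" Q
  using big_quad_Q1 big_quad_Q Q1_Q2_subset_Y subspace_Y Q_disjoint_Y by unfold_locales auto

sublocale two_big_quads \<subseteq> Q2: big_quad_in_subspace P L Q2 "generated_subspace P L (Q1 \<union> Q2)" Q
  using big_quad_Q2 big_quad_Q Q1_Q2_subset_Y subspace_Y Q_disjoint_Y by unfold_locales auto

context two_big_quads
begin

abbreviation p1 :: "'a \<Rightarrow> 'a" where "p1 \<equiv> proj_pt L Q1"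
abbreviation p2 :: "'a \<Rightarrow> 'a" where "p2 \<equiv> proj_pt L Q2"
abbreviation p12 :: "'a \<Rightarrow> 'a" where "p12 z \<equiv> p1 (p2 z)"

lemma in_P [simp]: "u \<in> Q1 \<Longrightarrow> u \<in> P" "u \<in> Q2 \<Longrightarrow> u \<in> P" "u \<in> Q \<Longrightarrow> u \<in> P"
  using Q1.X_subset Q2.X_subset Q1.Q_subset by auto

lemma notin_Q1_Q2_Y_if_in_Q [simp]:
  "u \<in> Q \<Longrightarrow> u \<notin> Q1" "u \<in> Q \<Longrightarrow> u \<notin> Q2" "u \<in> Q \<Longrightarrow> u \<notin> Y"
  using Q1.notin_X_if_in_Q Q2.notin_X_if_in_Q Q_disjoint_Y by auto

lemma Q1_Q2_disjointD: "u \<in> Q1 \<Longrightarrow> u \<notin> Q2" "u \<in> Q2 \<Longrightarrow> u \<notin> Q1"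
  using Q1_Q2_disjoint by auto

text \<open>Only one direction of \<open>Q1 \<inter> Q2 = {}\<close> is a simp rule: both together make the simplifier loop.\<close>

declare Q1_Q2_disjointD(1) [simp]

lemma proj_notin_other [simp]:
  "z \<in> P \<Longrightarrow> z \<notin> Q2 \<Longrightarrow> p2 z \<notin> Q1" "z \<in> P \<Longrightarrow> z \<notin> Q1 \<Longrightarrow> p1 z \<notin> Q2"
  using Q1.proj_neighbour Q2.proj_neighbour Q1_Q2_disjointD by blast+

lemma notin_Q_if_in_Q1_Q2: "u \<in> Q1 \<Longrightarrow> u \<notin> Q" "u \<in> Q2 \<Longrightarrow> u \<notin> Q"
  using Q1.notin_X_if_in_Q Q2.notin_X_if_in_Q by auto

lemma p12_in_Q1: "z \<in> P \<Longrightarrow> z \<notin> Q2 \<Longrightarrow> p12 z \<in> Q1"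
  using Q1.proj_neighbour[of "p2 z"] Q2.proj_neighbour[of z] by simp

lemma p1_p2: "u \<in> Q1 \<Longrightarrow> p1 (p2 u) = u"
  using Q2.proj_neighbour[of u] Q1.proj_eqI[of "p2 u" u] adj_commute by simp

lemma p2_p1: "v \<in> Q2 \<Longrightarrow> p2 (p1 v) = v"
  using Q1.proj_neighbour[of v] Q2.proj_eqI[of "p1 v" v] Q1_Q2_disjointD(2)[of v] adj_commute
  by simp

lemma dist_p1_on_Q2:
  assumes "u \<in> Q2" "v \<in> Q2"
  shows "d (p1 u) (p1 v) = d u v"
proof -
  have v1: "p1 v \<in> Q1" using Q1.proj_neighbour assms(2) Q1_Q2_disjointD(2) by simp
  have "d u (p1 v) = d (p1 u) (p1 v) + 1"
    using Q1.dist_proj assms(1) v1 Q1_Q2_disjointD(2)[of u] by simp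
  moreover have "d (p1 v) u = d v u + 1" using Q2.dist_proj[of "p1 v" u] v1 assms p2_p1 by simp
  ultimately show ?thesis using dist_commute assms v1 by simp
qed

lemma dist_p2_Q1:
  assumes "a \<in> Q1" "b \<in> Q1"
  shows "d (p2 a) b = d a b + 1"
  using Q1.dist_proj[of "p2 a" b] Q2.proj_neighbour[of a] assms p1_p2 by simp

lemma dist_p1_p12_le:
  assumes z: "z \<in> P" "z \<notin> Q1" "z \<notin> Q2"
  shows "d (p1 z) (p12 z) \<le> 1"
proof -
  have a: "p1 z \<in> Q1" "adj z (p1 z)" using Q1.proj_neighbour z by auto
  have b: "p2 z \<in> Q2" using Q2.proj_neighbour z by auto
  have c: "p2 (p1 z) \<in> Q2" "adj (p1 z) (p2 (p1 z))" using Q2.proj_neighbour[of "p1 z"] a(1) by auto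
  have "d z (p2 (p1 z)) \<le> d z (p1 z) + d (p1 z) (p2 (p1 z))"
    using dist_triangle z(1) a(1) c(1) by simp
  then have "d z (p2 (p1 z)) \<le> 2" using a(2) c(2) dist_adj by simp
  moreover have "d z (p2 (p1 z)) = d (p2 z) (p2 (p1 z)) + 1" using Q2.dist_proj z c(1) by blast
  ultimately have "d (p2 z) (p2 (p1 z)) \<le> 1" by simp
  then have "d (p12 z) (p1 z) \<le> 1" using dist_p1_on_Q2[OF b c(1)] p1_p2[OF a(1)] by simp
  moreover have "p12 z \<in> P" using p12_in_Q1 z(1,3) by simp
  ultimately show ?thesis using dist_commute a(1) by simp
qed

text \<open>If \<open>p1 z = p12 z\<close>, then \<open>p1 z\<close> is collinear with \<open>p2 z\<close>, so \<open>z\<close>, \<open>p1 z\<close>, \<open>p2 z\<close> span a line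
  meeting \<open>Y\<close> twice.\<close>

lemma adj_p1_p12:
  assumes z: "z \<in> P" "z \<notin> Y"
  shows "adj (p1 z) (p12 z)"
proof -
  have zQ: "z \<notin> Q1" "z \<notin> Q2" using z(2) Q1_Q2_subset_Y by auto
  have a: "p1 z \<in> Q1" "adj z (p1 z)" and b: "p2 z \<in> Q2" "adj z (p2 z)"
    using Q1.proj_neighbour Q2.proj_neighbour z(1) zQ by auto
  have "p1 z \<noteq> p12 z"
  proof
    assume "p1 z = p12 z"
    then have "p2 (p1 z) = p2 z" using p2_p1 b(1) by simp
    then have "adj (p1 z) (p2 z)" using Q2.proj_neighbour[of "p1 z"] a(1) by simp
    then obtain l where l: "l \<in> L" "z \<in> l" "p1 z \<in> l" "p2 z \<in> l"
      using line_through_triangle a(2) b(2) by blast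
    have "p1 z \<noteq> p2 z" using a(1) b(1) by auto
    then have "l \<subseteq> Y"
      using subspace_line[OF subspace_Y l(1,3,4)] a(1) b(1) Q1_Q2_subset_Y by blast
    then show False using l(2) z(2) by blast
  qed
  moreover have "p12 z \<in> P" using p12_in_Q1 z(1) zQ(2) by simp
  ultimately show ?thesis
    using adj_if_dist_le_1 dist_p1_p12_le[OF z(1) zQ] a(1) by simp
qed

lemma dist_p1_le: "q \<in> Q \<Longrightarrow> q' \<in> Q \<Longrightarrow> d (p1 q) (p1 q') \<le> d q q'"
  using Q1.dist_proj_le[of q q'] by simp

lemma dist_p12_le:
  assumes "q \<in> Q" "q' \<in> Q"
  shows "d (p12 q) (p12 q') \<le> d q q'"
proof -
  have "p2 q \<in> Q2" "p2 q' \<in> Q2" using Q2.proj_neighbour assms by simp_all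
  then show ?thesis using Q2.dist_proj_le[of q q'] dist_p1_on_Q2 assms by simp
qed

lemma Q1_subset_p12_image: "Q1 \<subseteq> p12 ` Q"
proof
  fix u assume u: "u \<in> Q1"
  then have "p2 u \<in> Q2" using Q2.proj_neighbour by simp
  then obtain q where "q \<in> Q" "p2 q = p2 u" using Q2.X_subset_proj_image by force
  then show "u \<in> p12 ` Q" using p1_p2[OF u] by force
qed

lemma inj_on_p12: "inj_on p12 Q"
proof (rule inj_onI)
  fix q q' assume q: "q \<in> Q" "q' \<in> Q" and "p12 q = p12 q'"
  then have "p2 q = p2 q'" using p2_p1 Q2.proj_neighbour by (metis notin_Q1_Q2_Y_if_in_Q(2) in_P(3))
  then show "q = q'" using Q2.inj_on_proj q by (simp add: inj_on_def)
qed

lemma adj_p1_if_adj: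
  assumes "q \<in> Q" "q' \<in> Q" "adj q q'"
  shows "adj (p1 q) (p1 q')"
proof (rule adj_if_dist_le_1)
  show "p1 q \<in> P" "p1 q' \<in> P" using Q1.proj_neighbour assms(1,2) by simp_all
  show "d (p1 q) (p1 q') \<le> 1" using dist_p1_le[OF assms(1,2)] dist_adj[OF assms(3)] by simp
  show "p1 q \<noteq> p1 q'"
    using inj_on_eq_iff[OF Q1.inj_on_proj assms(1,2)] adj_neq[OF assms(3)] by simp
qed

lemma adj_p12_if_adj:
  assumes "q \<in> Q" "q' \<in> Q" "adj q q'"
  shows "adj (p12 q) (p12 q')"
proof (rule adj_if_dist_le_1)
  show "p12 q \<in> P" "p12 q' \<in> P" using p12_in_Q1 assms(1,2) by simp_all
  show "d (p12 q) (p12 q') \<le> 1" using dist_p12_le[OF assms(1,2)] dist_adj[OF assms(3)] by simp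
  show "p12 q \<noteq> p12 q'" using inj_on_eq_iff[OF inj_on_p12 assms(1,2)] adj_neq[OF assms(3)] by simp
qed

subsection \<open>The big quad \<open>Q\<close> is a subspace\<close>

text \<open>A line \<open>{r, r', p}\<close> with \<open>r, r' \<in> Q\<close> and \<open>p \<notin> Q\<close> is ruled out by comparing its images
  under \<open>p1\<close> and \<open>p12\<close>, two bijections of \<open>Q\<close> onto \<open>Q1\<close> which map collinear points to
  collinear points.\<close>

context
  fixes l :: "'a set" and r r' p :: 'a
  assumes l: "l \<in> L" "r \<in> l" "r' \<in> l" "p \<in> l" "r \<noteq> r'"
    and r: "r \<in> Q" "r' \<in> Q" and p: "p \<notin> Q"
begin

lemma secant_p: "p \<in> P" "p \<noteq> r" "p \<noteq> r'"
  using l r p line_subset by auto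

lemma near_secant: "q \<in> Q \<Longrightarrow> d q r \<le> 1 \<or> d q r' \<le> 1"
  using quad_near_secant[OF Q1.quad_Q l(1-5) r p] .

lemma near_image_of_secant:
  assumes onto: "Q1 \<subseteq> f ` Q"
    and contraction: "\<And>q q'. q \<in> Q \<Longrightarrow> q' \<in> Q \<Longrightarrow> d (f q) (f q') \<le> d q q'"
    and "t \<in> Q1"
  shows "d t (f r) \<le> 1 \<or> d t (f r') \<le> 1"
proof -
  obtain q where "q \<in> Q" "t = f q" using onto \<open>t \<in> Q1\<close> by blast
  then show ?thesis using contraction[of q r] contraction[of q r'] near_secant[of q] r by auto
qed

lemma secant_avoids_Q1: "l \<inter> Q1 = {}"
proof -
  have "p \<notin> Q1"
  proof
    assume "p \<in> Q1"
    then have "p1 r = p1 r'"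
      using Q1.proj_eqI adj_if_on_line l secant_p r by (metis notin_Q1_Q2_Y_if_in_Q(1) in_P(3))
    then show False using inj_on_eq_iff[OF Q1.inj_on_proj r] l(5) by blast
  qed
  then show ?thesis using line_eq_three[OF l(1-4) l(5)] secant_p r by auto
qed

lemma secant_avoids_Q2: "l \<inter> Q2 = {}"
proof -
  have "p \<notin> Q2"
  proof
    assume "p \<in> Q2"
    then have "p2 r = p2 r'"
      using Q2.proj_eqI adj_if_on_line l secant_p r by (metis notin_Q1_Q2_Y_if_in_Q(2) in_P(3))
    then show False using inj_on_eq_iff[OF Q2.inj_on_proj r] l(5) by blast
  qed
  then show ?thesis using line_eq_three[OF l(1-4) l(5)] secant_p r by auto
qed

lemma adj_p1_p: "w \<in> {r, r'} \<Longrightarrow> adj (p1 w) (p1 p)"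
  using Q1.adj_proj_if_line_avoids[OF l(1) _ l(4) _ secant_avoids_Q1] l secant_p by auto

lemma adj_p12_p:
  assumes "w \<in> {r, r'}"
  shows "adj (p12 w) (p12 p)"
proof -
  have "p \<notin> Q2" using secant_avoids_Q2 l(4) by blast
  have "adj (p2 w) (p2 p)"
    using Q2.adj_proj_if_line_avoids[OF l(1) _ l(4) _ secant_avoids_Q2] assms l secant_p by auto
  moreover have "p2 w \<in> Q2" "p2 p \<in> Q2"
    using Q2.proj_neighbour assms r secant_p(1) \<open>p \<notin> Q2\<close> by auto
  ultimately have "d (p12 w) (p12 p) = 1" using dist_p1_on_Q2 dist_adj by simp
  moreover have "p12 w \<in> Q1" "p12 p \<in> Q1"
    using p12_in_Q1 assms r secant_p(1) \<open>p \<notin> Q2\<close> by auto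
  ultimately show ?thesis using dist_eq_1_iff by simp
qed

lemma images_in_Q1: "w \<in> {r, r', p} \<Longrightarrow> p1 w \<in> Q1" "w \<in> {r, r', p} \<Longrightarrow> p12 w \<in> Q1"
proof -
  assume "w \<in> {r, r', p}"
  then have "w \<in> P" "w \<notin> Q1" "w \<notin> Q2"
    using r secant_p(1) secant_avoids_Q1 secant_avoids_Q2 l(4) by auto
  then show "p1 w \<in> Q1" "p12 w \<in> Q1" using Q1.proj_neighbour p12_in_Q1 by simp_all
qed

lemma common_image_line:
  assumes ne: "p1 p \<noteq> p12 p"
  obtains M where "M \<in> L" "\<And>w. w \<in> {r, r', p} \<Longrightarrow> p1 w \<in> M \<and> p12 w \<in> M"
proof -
  have "p \<notin> Q1" "p \<notin> Q2" using secant_avoids_Q1 secant_avoids_Q2 l(4) by auto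
  then have adj_p: "adj (p12 p) (p1 p)"
    using adj_if_dist_le_1 dist_p1_p12_le[OF secant_p(1)] ne images_in_Q1 adj_commute by simp
  have "adj r r'" using adj_if_on_line l(1,2,3,5) .
  obtain M where M: "M \<in> L" "p1 r \<in> M" "p1 r' \<in> M" "p1 p \<in> M"
    using line_through_triangle[OF adj_p1_if_adj[OF r \<open>adj r r'\<close>]] adj_p1_p by blast
  obtain M' where M': "M' \<in> L" "p12 r \<in> M'" "p12 r' \<in> M'" "p12 p \<in> M'"
    using line_through_triangle[OF adj_p12_if_adj[OF r \<open>adj r r'\<close>]] adj_p12_p by blast
  have "p12 p \<in> M"
  proof -
    obtain w where w: "w \<in> {r, r'}" "d (p12 p) (p1 w) \<le> 1"
      using near_image_of_secant[OF Q1.X_subset_proj_image dist_p1_le images_in_Q1(2)[of p]] by auto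
    then show ?thesis
      using on_line_if_adj_and_near[OF M(1) _ M(4) adj_neq[OF adj_p1_p] _ adj_p] M(2,3)
        images_in_Q1(2)[of p] by auto
  qed
  moreover have "p1 p \<in> M'"
  proof -
    obtain w where w: "w \<in> {r, r'}" "d (p1 p) (p12 w) \<le> 1"
      using near_image_of_secant[OF Q1_subset_p12_image dist_p12_le images_in_Q1(1)[of p]] by auto
    then show ?thesis
      using on_line_if_adj_and_near[OF M'(1) _ M'(4) adj_neq[OF adj_p12_p] _ adj_commute[OF adj_p]]
        M'(2,3) images_in_Q1(1)[of p] by auto
  qed
  ultimately have "M' = M" using line_unique[OF ne M'(1) M(1)] M(4) M'(4) by blast
  then show ?thesis using that M M' by blast
qed

text \<open>Otherwise the images of \<open>r, r', p\<close> under \<open>p1\<close> and \<open>p12\<close> all lie on one line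
  \<open>{p1 p, p12 p, c}\<close>, and a point of \<open>Q1\<close> opposite to \<open>c\<close> would be collinear with both \<open>p1 p\<close>
  and \<open>p12 p\<close>.\<close>

lemma p1_eq_p12_on_secant: "p1 p = p12 p"
proof (rule ccontr)
  assume ne: "p1 p \<noteq> p12 p"
  obtain M where M: "M \<in> L" and on_M: "\<And>w. w \<in> {r, r', p} \<Longrightarrow> p1 w \<in> M \<and> p12 w \<in> M"
    using common_image_line ne by blast
  obtain c where c: "c \<in> M" "c \<noteq> p1 p" "c \<noteq> p12 p" "M = {p1 p, p12 p, c}"
    using line_third_point[OF M] on_M[of p] ne by blast
  have "c \<in> Q1"
    using Q1.line_subset_X[OF M _ _ ne] on_M[of p] images_in_Q1[of p] c(1) by blast
  then obtain t where t: "t \<in> Q1" "d c t = 2" using quad_far_point Q1.quad_X by blast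
  then have "d t c = 2" using dist_commute \<open>c \<in> Q1\<close> by simp
  have "d t (p12 p) \<le> 1"
  proof -
    obtain w where "w \<in> {r, r'}" "d t (p1 w) \<le> 1"
      using near_image_of_secant[OF Q1.X_subset_proj_image dist_p1_le t(1)] by auto
    moreover from this have "p1 w \<in> {p12 p, c}" using on_M c(4) adj_neq[OF adj_p1_p] by fastforce
    ultimately show ?thesis using \<open>d t c = 2\<close> by auto
  qed
  moreover have "d t (p1 p) \<le> 1"
  proof -
    obtain w where "w \<in> {r, r'}" "d t (p12 w) \<le> 1"
      using near_image_of_secant[OF Q1_subset_p12_image dist_p12_le t(1)] by auto
    moreover from this have "p12 w \<in> {p1 p, c}" using on_M c(4) adj_neq[OF adj_p12_p] by fastforce
    ultimately show ?thesis using \<open>d t c = 2\<close> by auto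
  qed
  ultimately show False
    using line_dist_cases[OF in_P(1)[OF t(1)] M] on_M[of p] c(1-3) ne \<open>d t c = 2\<close> by fastforce
qed

text \<open>With \<open>s = p1 p = p12 p\<close>, the line through \<open>p1 r\<close>, \<open>p12 r\<close> and \<open>s\<close> also contains
  \<open>p1 r' = p12 r\<close> and \<open>p12 r' = p1 r\<close>.  A point \<open>q0 \<in> Q\<close> with \<open>p1 q0 = s\<close> is collinear with \<open>r\<close> or
  \<open>r'\<close>, which puts \<open>p12 q0\<close> on this line as well and forces \<open>q0 \<in> {r, r'}\<close>.\<close>

lemma secant_impossible: False
proof -
  define s where "s = p1 p"
  have ps: "p12 p = s" using p1_eq_p12_on_secant s_def by simp
  have "adj r r'" using adj_if_on_line l(1,2,3,5) .
  have adj_s: "adj (p1 w) s" "adj (p12 w) s" if "w \<in> {r, r'}" for w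
    using adj_p1_p adj_p12_p that s_def ps by auto
  have adj_w: "adj (p1 w) (p12 w)" if "w \<in> {r, r'}" for w
    using adj_p1_p12 that r by auto
  obtain M where M: "M \<in> L" "p1 r \<in> M" "p12 r \<in> M" "s \<in> M"
    using line_through_triangle[OF adj_w[of r] adj_s(2)[of r] adj_s(1)[of r]] by auto
  have M_eq: "M = {p1 r, p12 r, s}"
    using line_eq_three[OF M] adj_neq adj_w[of r] adj_s[of r] by auto
  have "p1 r' \<in> M"
    using on_line_if_adj_to_two[OF M(1,2,4) adj_neq[OF adj_s(1)]]
      adj_p1_if_adj[OF r \<open>adj r r'\<close>] adj_s(1)[of r'] adj_commute by auto
  moreover have "p1 r' \<noteq> p1 r" using inj_on_eq_iff[OF Q1.inj_on_proj r] l(5) by auto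
  ultimately have "p1 r' = p12 r" using M_eq adj_neq adj_s(1)[of r'] by auto
  have "p12 r' \<in> M"
    using on_line_if_adj_to_two[OF M(1) \<open>p1 r' \<in> M\<close> M(4) adj_neq[OF adj_s(1)]]
      adj_w[of r'] adj_s(2)[of r'] adj_commute by auto
  moreover have "p12 r' \<noteq> p12 r" using inj_on_eq_iff[OF inj_on_p12 r] l(5) by auto
  ultimately have "p12 r' = p1 r" using M_eq adj_neq adj_s(2)[of r'] by auto
  then have M_eq': "M = {p12 r, p12 r', s}" using M_eq by auto
  have "s \<in> Q1" using images_in_Q1 s_def by blast
  then obtain q0 where q0: "q0 \<in> Q" "p1 q0 = s" using Q1.X_subset_proj_image by force
  have "q0 \<notin> {r, r'}" using q0(2) adj_s(1) adj_neq by blast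
  moreover have "q0 \<in> P" "r \<in> P" "r' \<in> P" using q0(1) r by simp_all
  ultimately obtain w where w: "w \<in> {r, r'}" "adj q0 w"
    using near_secant[OF q0(1)] adj_if_dist_le_1 by blast
  have "p12 q0 \<in> M"
    using on_line_if_adj_to_two[OF M(1) _ M(4) adj_neq[OF adj_s(2)[OF w(1)]]]
      adj_p12_if_adj[OF q0(1) _ w(2)] adj_p1_p12[of q0] q0 w(1) M_eq' r adj_commute by auto
  moreover have "p12 q0 \<noteq> s" using adj_neq[OF adj_p1_p12[of q0]] q0 by simp
  ultimately have "p12 q0 \<in> {p12 r, p12 r'}" using M_eq' by blast
  then show False using inj_on_eq_iff[OF inj_on_p12] q0(1) r \<open>q0 \<notin> {r, r'}\<close> by auto
qed

end

lemma subspace_Q: "subspace P L Q"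
  unfolding subspace_def using Q1.Q_subset secant_impossible by blast

lemma dist_p1_on_Q: "q \<in> Q \<Longrightarrow> q' \<in> Q \<Longrightarrow> d (p1 q) (p1 q') = d q q'"
  using Q1.dist_proj_on_Q[OF subspace_Q] .

lemma dist_p12_on_Q:
  assumes "q \<in> Q" "q' \<in> Q"
  shows "d (p12 q) (p12 q') = d q q'"
proof -
  have "p2 q \<in> Q2" "p2 q' \<in> Q2" using Q2.proj_neighbour assms by simp_all
  then show ?thesis using Q2.dist_proj_on_Q[OF subspace_Q assms] dist_p1_on_Q2 by simp
qed

lemma dist_from_Q: "z \<in> P \<Longrightarrow> z \<notin> Q \<Longrightarrow> r \<in> Q \<Longrightarrow> adj z r \<Longrightarrow> q \<in> Q \<Longrightarrow> d z q = d r q + 1"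
  using dist_through_neighbour_outside_subspace[OF Q1.quad_Q subspace_Q subset_refl] .

lemma p1_ne_p12_if_dist_2:
  assumes "x \<in> Q" "y \<in> Q" "d x y = 2"
  shows "p1 x \<noteq> p12 y"
proof
  assume eq: "p1 x = p12 y"
  have x1: "p1 x \<in> Q1" "adj x (p1 x)" using Q1.proj_neighbour assms(1) by simp_all
  have y2: "p2 y \<in> Q2" "adj y (p2 y)" using Q2.proj_neighbour assms(2) by simp_all
  have "p2 (p1 x) = p2 y" using eq p2_p1 y2(1) by simp
  then have "adj (p1 x) (p2 y)" using Q2.proj_neighbour[of "p1 x"] x1(1) by simp
  then have "d x (p2 y) \<le> 2"
    using dist_triangle[of x "p1 x" "p2 y"] x1 y2(1) assms(1) dist_adj by simp
  moreover have "d (p2 y) x = d y x + 1"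
    using dist_from_Q[OF in_P(2)[OF y2(1)] notin_Q_if_in_Q1_Q2(2)[OF y2(1)] assms(2)
        adj_commute[OF y2(2)] assms(1)] .
  ultimately show False using dist_commute[of x y] dist_commute[of x "p2 y"] assms y2(1) by simp
qed

text \<open>The third point \<open>g\<close> of the line through \<open>p1 x\<close> and \<open>p12 x\<close> and its projection \<open>p2 g\<close> are
  both at distance \<open>2\<close> from \<open>x\<close>, so the third point \<open>m \<in> Y\<close> of the line \<open>g (p2 g)\<close> is collinear
  with \<open>x\<close> and hence at distance \<open>3\<close> from \<open>y\<close>.\<close>

lemma dist_to_third_point:
  assumes xy: "x \<in> Q" "y \<in> Q" "d x y = 2"
    and l: "l \<in> L" "p1 x \<in> l" "p12 x \<in> l" "g \<in> l" "g \<noteq> p1 x" "g \<noteq> p12 x"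
  shows "{d (p1 y) g, d (p12 y) g} = {1, 2}"
proof -
  have adj_x: "adj (p1 x) (p12 x)" using adj_p1_p12 xy(1) by simp
  have in_Q1: "p1 z \<in> Q1" "p12 z \<in> Q1" if "z \<in> Q" for z
    using Q1.proj_neighbour p12_in_Q1 that by simp_all
  have "g \<in> Q1" using Q1.line_subset_X[OF l(1-3) adj_neq[OF adj_x]] in_Q1 xy(1) l(4) by blast
  then have g2: "p2 g \<in> Q2" "adj g (p2 g)" using Q2.proj_neighbour by simp_all
  have dist_g: "d z g = d (p1 z) g + 1" "d z (p2 g) = d (p12 z) g + 1" if "z \<in> Q" for z
  proof -
    show "d z g = d (p1 z) g + 1" using Q1.dist_proj that \<open>g \<in> Q1\<close> by simp
    have "p2 z \<in> Q2" using Q2.proj_neighbour that by simp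
    then have "d (p2 z) (p2 g) = d (p12 z) g"
      using dist_p1_on_Q2[OF _ g2(1)] p1_p2[OF \<open>g \<in> Q1\<close>] by simp
    then show "d z (p2 g) = d (p12 z) g + 1" using Q2.dist_proj that g2(1) by simp
  qed
  obtain lm where lm: "lm \<in> L" "g \<in> lm" "p2 g \<in> lm" using adj_on_line g2(2) by blast
  obtain m where m: "m \<in> lm" "m \<noteq> g" "m \<noteq> p2 g"
    using line_third_point[OF lm adj_neq[OF g2(2)]] by blast
  have "m \<in> Y"
    using subspace_line[OF subspace_Y lm adj_neq[OF g2(2)]] \<open>g \<in> Q1\<close> g2(1) Q1_Q2_subset_Y m(1)
    by blast
  then have mP: "m \<in> P" and mQ: "m \<notin> Q"
    using subspace_Y Q_disjoint_Y by (auto simp: subspace_def)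
  have gP: "g \<in> P" "p2 g \<in> P" using \<open>g \<in> Q1\<close> g2(1) by simp_all
  have "d (p1 x) g = 1" "d (p12 x) g = 1"
    using dist_adj adj_if_on_line[OF l(1)] l(2-6) by (metis adj_commute)+
  then have "d x g = 2" "d x (p2 g) = 2" using dist_g xy(1) by simp_all
  then have "d x m = 1"
    using line_dist_cases[OF in_P(3)[OF xy(1)] lm m(1) adj_neq[OF g2(2)] m(2)[symmetric]
        m(3)[symmetric]]
    by auto
  then have "adj m x" using dist_eq_1_iff mP xy(1) adj_commute by simp
  then have "d m y = 3" using dist_from_Q[OF mP mQ xy(1) _ xy(2)] xy(3) by simp
  then have "d y m = 3" using dist_commute mP xy(2) by simp
  moreover have "d y g \<le> 3" "d y (p2 g) \<le> 3" using diameter xy(2) gP by simp_all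
  ultimately have "{d y g, d y (p2 g)} = {2, 3}"
    using line_dist_cases[OF in_P(3)[OF xy(2)] lm m(1) adj_neq[OF g2(2)] m(2)[symmetric]
        m(3)[symmetric]]
    by auto
  then show ?thesis using dist_g xy(2) by (auto simp: doubleton_eq_iff)
qed

lemma dist_p1_p12_cross:
  assumes xy: "x \<in> Q" "y \<in> Q" "d x y = 2"
  shows "(d (p1 x) (p12 y), d (p1 y) (p12 x)) \<in> {(1, 2), (2, 1)}"
proof -
  have in_Q1: "p1 z \<in> Q1" "p12 z \<in> Q1" if "z \<in> Q" for z
    using Q1.proj_neighbour p12_in_Q1 that by simp_all
  have adj_x: "adj (p1 x) (p12 x)" using adj_p1_p12 xy(1) by simp
  obtain l where l: "l \<in> L" "p1 x \<in> l" "p12 x \<in> l" using adj_on_line adj_x by blast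
  obtain g where g: "g \<in> l" "g \<noteq> p1 x" "g \<noteq> p12 x"
    using line_third_point[OF l adj_neq[OF adj_x]] by blast
  have g_dists: "{d (p1 y) g, d (p12 y) g} = {1, 2}"
    using dist_to_third_point[OF xy l g] .
  have "p1 x \<noteq> p12 y" "p1 y \<noteq> p12 x"
    using p1_ne_p12_if_dist_2 xy dist_commute[of x y] by simp_all
  then have "d (p1 x) (p12 y) \<noteq> 0" "d (p1 y) (p12 x) \<noteq> 0"
    using dist_eq_0_iff in_Q1 xy(1,2) by simp_all
  moreover have "d (p1 x) (p12 y) \<le> 2" "d (p1 y) (p12 x) \<le> 2"
    using quad_diameter[OF Q1.quad_X] in_Q1 xy(1,2) by blast+
  moreover have "d (p1 y) (p1 x) = 2" "d (p12 y) (p12 x) = 2"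
    using dist_p1_on_Q dist_p12_on_Q xy dist_commute[of x y] by simp_all
  moreover have "d (p12 y) (p1 x) = d (p1 x) (p12 y)" using dist_commute in_Q1 xy by simp
  moreover note
    line_dist_cases[OF in_P(1)[OF in_Q1(1)[OF xy(2)]] l(1,2,3) g(1) adj_neq[OF adj_x]
      g(2)[symmetric] g(3)[symmetric]]
    line_dist_cases[OF in_P(1)[OF in_Q1(2)[OF xy(2)]] l(1,2,3) g(1) adj_neq[OF adj_x]
      g(2)[symmetric] g(3)[symmetric]]
  ultimately have "d (p1 y) (p12 x) + d (p1 y) g = 3" "d (p1 x) (p12 y) + d (p12 y) g = 3"
    by auto
  moreover have "d (p1 y) g \<noteq> d (p12 y) g" using g_dists by auto
  ultimately show ?thesis
    using \<open>d (p1 x) (p12 y) \<noteq> 0\<close> \<open>d (p1 y) (p12 x) \<noteq> 0\<close>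
      \<open>d (p1 x) (p12 y) \<le> 2\<close> \<open>d (p1 y) (p12 x) \<le> 2\<close> by auto
qed

end

theorem proposition2p6:
  fixes P :: "'a set" and L :: "'a set set" and Q1 Q2 Q :: "'a set" and x y :: 'a
  assumes "slim L" and "dense_nh P L"
    and "big_quad P L Q1" and "big_quad P L Q2" and "Q1 \<inter> Q2 = {}"
    and "big_quad P L Q" and "Q \<inter> generated_subspace P L (Q1 \<union> Q2) = {}"
    and "x \<in> Q" and "y \<in> Q" and "x \<noteq> y" and "\<not> collinear L x y"
  shows "(pdist L (proj_pt L Q2 (proj_pt L Q1 x)) (proj_pt L Q1 (proj_pt L Q2 y)),
          pdist L (proj_pt L Q1 (proj_pt L Q2 x)) (proj_pt L Q2 (proj_pt L Q1 y)))
         \<in> {(2, 3), (3, 2)}"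
proof -
  interpret two_big_quads P L Q1 Q2 Q
    using assms(1-7) by unfold_locales
  have "d x y = 2"
    using quad_dist_eq_2[OF Q1.quad_Q assms(8-10)] assms(11) by (simp add: adj_def)
  have in_Q1: "p1 x \<in> Q1" "p1 y \<in> Q1" "p12 x \<in> Q1" "p12 y \<in> Q1"
    using Q1.proj_neighbour p12_in_Q1 assms(8,9) by simp_all
  then have "p2 (p1 y) \<in> P" using Q2.proj_neighbour by simp
  then have "d (p2 (p1 x)) (p12 y) = d (p1 x) (p12 y) + 1"
    "d (p12 x) (p2 (p1 y)) = d (p1 y) (p12 x) + 1"
    using dist_p2_Q1 in_Q1 dist_commute[of "p12 x" "p2 (p1 y)"] by simp_all
  then show ?thesis using dist_p1_p12_cross[OF assms(8,9) \<open>d x y = 2\<close>] by auto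
qed

end
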